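(* Let $\Lambda\in\mathbb{N}$, let $k\ge\Lambda^2(\Lambda+1)^2$, and let $\bm{\chi}=\sum_{m=-\Lambda}^{\Lambda}\cos\!\left(\frac{\pi m}{2\Lambda+2}\right)\psi_m\in\mathcal{H}_\Lambda$. Then $$(\Delta\bm{x})^2_{\bm{\chi}}<\frac{3.5}{(\Lambda+1)^2}.$$
   Context: (Fuzzy circle $S^1_\Lambda$.) $\mathcal{H}_\Lambda$ is a $(2\Lambda+1)$-dimensional Hilbert space with orthonormal basis $\{\psi_n\}_{n=-\Lambda}^{\Lambda}$. Operators: $x_+\psi_n=b_{n+1}\psi_{n+1}$, $x_-\psi_n=b_n\psi_{n-1}$, where $b_n=\sqrt{1+n(n-1)/k}$ if $1-\Lambda\le n\le\Lambda$ and $b_n=0$ otherwise; $x_1=(x_++x_-)/2$, $x_2=(x_+-x_-)/(2i)$, $\bm{x}^2=x_1^2+x_2^2$. For a nonzero vector $\bm{\chi}$, $\langle A\rangle_{\bm\chi}=\langle\bm{\chi},A\bm{\chi}\rangle/\langle\bm\chi,\bm\chi\rangle$ and $(\Delta\bm{x})^2_{\bm\chi}=\langle\bm{x}^2\rangle_{\bm\chi}-\langle x_1\rangle_{\bm\chi}^2-\langle x_2\rangle_{\bm\chi}^2$. *)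

theory Defs
  imports "HOL-Analysis.Analysis"
begin

text \<open>Vectors of H_Lambda are represented by their coefficient
 functions int => complex w.r.t. the basis psi_n, n in {-Lambda..Lambda};
 coefficients outside this range are ignored / set to zero.\<close>

type_synonym fvec = "int \<Rightarrow> complex"

definition fc_b :: "nat \<Rightarrow> real \<Rightarrow> int \<Rightarrow> real" where
  "fc_b L k n = (if 1 - int L \<le> n \<and> n \<le> int L
                 then sqrt (1 + real_of_int (n * (n - 1)) / k) else 0)"

definition fc_range :: "nat \<Rightarrow> int set" where
  "fc_range L = {- int L .. int L}"

definition fc_inner :: "nat \<Rightarrow> fvec \<Rightarrow> fvec \<Rightarrow> complex" where
  "fc_inner L u v = (\<Sum>n\<in>fc_range L. cnj (u n) * v n)"

text \<open>x_+ psi_n = b_(n+1) psi_(n+1): coefficient at n of x_+ v is b_n v_(n-1).\<close>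
definition fc_xplus :: "nat \<Rightarrow> real \<Rightarrow> fvec \<Rightarrow> fvec" where
  "fc_xplus L k v n = (if n \<in> fc_range L then complex_of_real (fc_b L k n) * v (n - 1) else 0)"

text \<open>x_- psi_n = b_n psi_(n-1): coefficient at n of x_- v is b_(n+1) v_(n+1).\<close>
definition fc_xminus :: "nat \<Rightarrow> real \<Rightarrow> fvec \<Rightarrow> fvec" where
  "fc_xminus L k v n = (if n \<in> fc_range L then complex_of_real (fc_b L k (n + 1)) * v (n + 1) else 0)"

definition fc_x1 :: "nat \<Rightarrow> real \<Rightarrow> fvec \<Rightarrow> fvec" where
  "fc_x1 L k v n = (fc_xplus L k v n + fc_xminus L k v n) / 2"

definition fc_x2 :: "nat \<Rightarrow> real \<Rightarrow> fvec \<Rightarrow> fvec" where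
  "fc_x2 L k v n = (fc_xplus L k v n - fc_xminus L k v n) / (2 * \<i>)"

definition fc_xsq :: "nat \<Rightarrow> real \<Rightarrow> fvec \<Rightarrow> fvec" where
  "fc_xsq L k v n = fc_x1 L k (fc_x1 L k v) n + fc_x2 L k (fc_x2 L k v) n"

definition fc_expect :: "nat \<Rightarrow> (fvec \<Rightarrow> fvec) \<Rightarrow> fvec \<Rightarrow> complex" where
  "fc_expect L A chi = fc_inner L chi (A chi) / fc_inner L chi chi"

text \<open>Expectations of self-adjoint operators are real; we take real parts.\<close>
definition fc_uncert :: "nat \<Rightarrow> real \<Rightarrow> fvec \<Rightarrow> real" where
  "fc_uncert L k chi = Re (fc_expect L (fc_xsq L k) chi)
      - (Re (fc_expect L (fc_x1 L k) chi))\<^sup>2 - (Re (fc_expect L (fc_x2 L k) chi))\<^sup>2"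

end

(* x_- is the adjoint of x_+, so for z = <v, x_+ v> one gets <v, x_1 v> = Re z and
   <v, x_2 v> = Im z, while x_1^2 + x_2^2 = (x_+ x_- + x_- x_+)/2 is diagonal with entries
   (b_n^2 + b_(n+1)^2)/2.  Hence (Delta x)^2 = sum_n (b_n^2 + b_(n+1)^2)/2 |v_n|^2 / N - (|z|/N)^2
   with N = |v|^2.  The bound on k gives 1 <= b_n <= sqrt (1 + 1/(Lambda+1)^2) on the support
   of b.  For the cosine state, with theta = pi/(2 Lambda + 2), telescoping trigonometric
   sums give N = Lambda + 1 and sum_n chi_n chi_(n-1) = (Lambda + 1) cos theta, so
   (Delta x)^2 <= 1/(Lambda+1)^2 + sin^2 theta <= (1 + pi^2/4)/(Lambda+1)^2. *)

theory Submission
  imports Defs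
begin

lemma fc_b_eq_0: "n \<notin> {1 - int L..int L} \<Longrightarrow> fc_b L k n = 0"
  by (auto simp: fc_b_def)

lemma fc_b_ge_1:
  assumes "0 \<le> k" and "n \<in> {1 - int L..int L}"
  shows "1 \<le> fc_b L k n"
proof -
  have "0 \<le> n * (n - 1)"
    by (cases "n \<ge> 1") (auto simp: mult_nonpos_nonpos)
  then have "0 \<le> real_of_int (n * (n - 1)) / k"
    using assms(1) by (simp only: divide_nonneg_nonneg of_int_0_le_iff)
  then show ?thesis
    using assms(2) by (simp add: fc_b_def)
qed

lemma fc_b_squared_le:
  assumes "0 \<le> k"
  shows "(fc_b L k n)\<^sup>2 \<le> 1 + (real L)\<^sup>2 / k"
proof (cases "n \<in> {1 - int L..int L}")
  case True
  have "0 \<le> n * (n - 1)"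
    by (cases "n \<ge> 1") (auto simp: mult_nonpos_nonpos)
  then have "0 \<le> real_of_int (n * (n - 1)) / k"
    using assms by (simp only: divide_nonneg_nonneg of_int_0_le_iff)
  moreover have "real_of_int (n * (n - 1)) / k \<le> (real L)\<^sup>2 / k"
  proof -
    have "0 \<le> (int L - n) * (int L + n - 1)"
      using True by (intro mult_nonneg_nonneg) auto
    then have "n * (n - 1) \<le> (int L)\<^sup>2"
      by (simp add: power2_eq_square algebra_simps)
    then have "real_of_int (n * (n - 1)) \<le> real_of_int ((int L)\<^sup>2)"
      by (simp only: of_int_le_iff)
    then show ?thesis
      using assms by (intro divide_right_mono) simp_all
  qed
  ultimately show ?thesis
    using True by (simp add: fc_b_def)
qed (simp add: fc_b_eq_0 assms)

lemma fc_b_squared_le_of_large_k: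
  assumes "real L ^ 2 * (real L + 1) ^ 2 \<le> k"
  shows "(fc_b L k n)\<^sup>2 \<le> 1 + 1 / (real L + 1)\<^sup>2"
proof -
  have "0 \<le> k"
    using assms by (meson order_trans zero_le_mult_iff zero_le_power2)
  have "(real L)\<^sup>2 / k \<le> 1 / (real L + 1)\<^sup>2"
  proof (cases "L = 0")
    case False
    then have "0 < (real L)\<^sup>2 * (real L + 1)\<^sup>2"
      by simp
    then have "(real L)\<^sup>2 / k \<le> (real L)\<^sup>2 / ((real L)\<^sup>2 * (real L + 1)\<^sup>2)"
      using assms by (intro divide_left_mono) simp_all
    then show ?thesis
      using False by simp
  qed simp
  then show ?thesis
    using fc_b_squared_le[OF \<open>0 \<le> k\<close>, of L n] by linarith
qed

lemma fc_inner_self: "fc_inner L v v = of_real (\<Sum>n\<in>fc_range L. (cmod (v n))\<^sup>2)"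
  by (simp add: fc_inner_def complex_norm_square mult.commute flip: of_real_power)

lemma fc_inner_xplus:
  "fc_inner L u (fc_xplus L k v) =
     (\<Sum>n\<in>{1 - int L..int L}. of_real (fc_b L k n) * cnj (u n) * v (n - 1))"
proof -
  have "fc_range L = insert (- int L) {1 - int L..int L}"
    by (auto simp: fc_range_def)
  then show ?thesis
    by (simp add: fc_inner_def fc_xplus_def fc_b_eq_0 fc_range_def mult_ac)
qed

lemma fc_inner_xminus:
  "fc_inner L u (fc_xminus L k v) =
     (\<Sum>n\<in>{1 - int L..int L}. of_real (fc_b L k n) * cnj (u (n - 1)) * v n)"
proof -
  have "fc_inner L u (fc_xminus L k v) =
          (\<Sum>n\<in>{- int L..int L}. of_real (fc_b L k (n + 1)) * cnj (u n) * v (n + 1))"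
    by (simp add: fc_inner_def fc_xminus_def fc_range_def mult_ac)
  also have "\<dots> = (\<Sum>n\<in>{1 - int L..int L + 1}. of_real (fc_b L k n) * cnj (u (n - 1)) * v n)"
    by (rule sum.reindex_bij_witness[of _ "\<lambda>n. n - 1" "\<lambda>n. n + 1"]) auto
  also have "\<dots> = (\<Sum>n\<in>{1 - int L..int L}. of_real (fc_b L k n) * cnj (u (n - 1)) * v n)"
  proof -
    have "{1 - int L..int L + 1} = insert (int L + 1) {1 - int L..int L}"
      by auto
    then show ?thesis
      by (simp add: fc_b_eq_0)
  qed
  finally show ?thesis .
qed

lemma fc_xminus_adjoint: "fc_inner L u (fc_xminus L k v) = cnj (fc_inner L v (fc_xplus L k u))"
  by (simp add: fc_inner_xplus fc_inner_xminus mult_ac)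

text \<open>\<open>b\<close> vanishes exactly where a shift leaves the range, so \<open>x\<^sub>+ x\<^sub>-\<close> and \<open>x\<^sub>- x\<^sub>+\<close> are diagonal.\<close>

lemma fc_xsq_diagonal:
  "fc_xsq L k v n =
     (if n \<in> fc_range L
      then of_real (((fc_b L k n)\<^sup>2 + (fc_b L k (n + 1))\<^sup>2) / 2) * v n else 0)"
  unfolding fc_xsq_def fc_x1_def fc_x2_def fc_xplus_def fc_xminus_def
  by (auto simp: fc_b_eq_0 fc_range_def power2_eq_square field_simps)

lemma fc_uncert_eq:
  fixes L :: nat and k :: real and v :: fvec
  defines "N \<equiv> \<Sum>n\<in>fc_range L. (cmod (v n))\<^sup>2"
    and "z \<equiv> fc_inner L v (fc_xplus L k v)"
  shows "fc_uncert L k v =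
           (\<Sum>n\<in>fc_range L. ((fc_b L k n)\<^sup>2 + (fc_b L k (n + 1))\<^sup>2) / 2 * (cmod (v n))\<^sup>2) / N
           - (cmod z / N)\<^sup>2"
proof -
  have halves: "fc_inner L v (\<lambda>n. (f n + c * g n) / d) = (fc_inner L v f + c * fc_inner L v g) / d"
    for f g :: fvec and c d
    unfolding fc_inner_def
    by (simp add: sum_distrib_left sum_divide_distrib sum.distrib add_divide_distrib ring_distribs
        mult.left_commute)
  have "fc_inner L v (fc_x1 L k v) = (z + 1 * cnj z) / 2"
    using halves[of "fc_xplus L k v" 1 "fc_xminus L k v" 2]
    by (simp add: fc_x1_def[abs_def] fc_xminus_adjoint z_def)
  then have x1: "fc_inner L v (fc_x1 L k v) = of_real (Re z)"
    by (simp add: complex_add_cnj)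
  have "fc_inner L v (fc_x2 L k v) = (z + (-1) * cnj z) / (2 * \<i>)"
    using halves[of "fc_xplus L k v" "-1" "fc_xminus L k v" "2 * \<i>"]
    by (simp add: fc_x2_def[abs_def] fc_xminus_adjoint z_def)
  then have x2: "fc_inner L v (fc_x2 L k v) = of_real (Im z)"
    by (simp add: complex_eq_iff)
  have xsq: "fc_inner L v (fc_xsq L k v) =
      of_real (\<Sum>n\<in>fc_range L. ((fc_b L k n)\<^sup>2 + (fc_b L k (n + 1))\<^sup>2) / 2 * (cmod (v n))\<^sup>2)"
    by (simp add: fc_inner_def fc_xsq_diagonal complex_norm_square mult_ac flip: of_real_power)
  show ?thesis
    unfolding fc_uncert_def fc_expect_def x1 x2 xsq fc_inner_self N_def[symmetric]
    by (simp add: cmod_power2 power_divide add_divide_distrib flip: of_real_divide)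
qed

lemma fc_uncert_le:
  fixes L :: nat and k :: real and v :: fvec
  defines "N \<equiv> \<Sum>n\<in>fc_range L. (cmod (v n))\<^sup>2"
    and "z \<equiv> fc_inner L v (fc_xplus L k v)"
  assumes b_bound: "\<And>n. (fc_b L k n)\<^sup>2 \<le> 1 + d"
    and "0 < N" and "0 \<le> a" and "a * N \<le> cmod z"
  shows "fc_uncert L k v \<le> 1 + d - a\<^sup>2"
proof -
  have "((fc_b L k n)\<^sup>2 + (fc_b L k (n + 1))\<^sup>2) / 2 \<le> 1 + d" for n
    using b_bound[of n] b_bound[of "n + 1"] by simp
  then have "(\<Sum>n\<in>fc_range L. ((fc_b L k n)\<^sup>2 + (fc_b L k (n + 1))\<^sup>2) / 2 * (cmod (v n))\<^sup>2)
          \<le> (\<Sum>n\<in>fc_range L. (1 + d) * (cmod (v n))\<^sup>2)"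
    by (intro sum_mono mult_right_mono) simp_all
  then have "(\<Sum>n\<in>fc_range L. ((fc_b L k n)\<^sup>2 + (fc_b L k (n + 1))\<^sup>2) / 2 * (cmod (v n))\<^sup>2) / N
               \<le> 1 + d"
    using \<open>0 < N\<close> by (simp add: divide_le_eq N_def flip: sum_distrib_left)
  moreover have "a\<^sup>2 \<le> (cmod z / N)\<^sup>2"
    using assms(4-6) by (intro power_mono) (simp_all add: le_divide_eq)
  ultimately show ?thesis
    unfolding fc_uncert_eq N_def[symmetric] z_def[symmetric] by linarith
qed

lemma sin_mult_sum_cos_squared:
  "2 * sin x * (\<Sum>m\<in>{- int L..int L}. (cos (real_of_int m * x))\<^sup>2)
     = (2 * real L + 1) * sin x + sin ((2 * real L + 1) * x)"
proof (induction L)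
  case (Suc L)
  define a where "a = (real L + 1) * x"
  have "{- int (Suc L)..int (Suc L)} = insert (- int (Suc L)) (insert (int (Suc L)) {- int L..int L})"
    by auto
  then have "(\<Sum>m\<in>{- int (Suc L)..int (Suc L)}. (cos (real_of_int m * x))\<^sup>2)
               = 2 * (cos a)\<^sup>2 + (\<Sum>m\<in>{- int L..int L}. (cos (real_of_int m * x))\<^sup>2)"
    using cos_minus[of a] by (simp add: a_def algebra_simps)
  moreover have "2 * (cos a)\<^sup>2 = 1 + cos (2 * a)"
    by (simp add: cos_double cos_squared_eq)
  moreover have "sin ((2 * real (Suc L) + 1) * x) = sin (2 * a + x)"
    and "sin ((2 * real L + 1) * x) = sin (2 * a - x)"
    by (simp_all add: a_def algebra_simps)
  ultimately show ?case
    using Suc.IH by (simp add: sin_add sin_diff algebra_simps)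
qed simp

lemma sin_mult_sum_cos_mult_cos_pred:
  "2 * sin x * (\<Sum>n\<in>{1 - int L..int L}. cos (real_of_int n * x) * cos (real_of_int (n - 1) * x))
     = 2 * real L * sin x * cos x + sin (2 * real L * x)"
proof (induction L)
  case (Suc L)
  define a where "a = (2 * real L + 1) * x"
  have "{1 - int (Suc L)..int (Suc L)} = insert (- int L) (insert (int (Suc L)) {1 - int L..int L})"
    by auto
  moreover have "- (x * real L) - x = - (x + x * real L)" \<comment> \<open>the summand at \<open>n = -L\<close>\<close>
    by simp
  then have "cos (- (x * real L) - x) = cos (x + x * real L)"
    by (simp only: cos_minus)
  ultimately have "(\<Sum>n\<in>{1 - int (Suc L)..int (Suc L)}. cos (real_of_int n * x) * cos (real_of_int (n - 1) * x))
               = 2 * cos (real L * x) * cos ((real L + 1) * x)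
                 + (\<Sum>n\<in>{1 - int L..int L}. cos (real_of_int n * x) * cos (real_of_int (n - 1) * x))"
    by (simp add: algebra_simps)
  moreover have "2 * cos (real L * x) * cos ((real L + 1) * x) = cos x + cos a"
    using cos_add[of "real L * x" "(real L + 1) * x"] cos_diff[of "(real L + 1) * x" "real L * x"]
    by (simp add: a_def algebra_simps)
  moreover have "sin (2 * real (Suc L) * x) = sin (a + x)" and "sin (2 * real L * x) = sin (a - x)"
    by (simp_all add: a_def algebra_simps)
  ultimately show ?case
    using Suc.IH by (simp add: sin_add sin_diff algebra_simps)
qed simp

definition fc_cos_state :: "nat \<Rightarrow> int \<Rightarrow> real" where
  "fc_cos_state L n =
     (if n \<in> fc_range L then cos (pi * real_of_int n / (2 * real L + 2)) else 0)"

lemma fc_cos_state_nonneg: "0 \<le> fc_cos_state L n"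
proof (cases "n \<in> fc_range L")
  case True
  have "pi * \<bar>real_of_int n\<bar> \<le> pi * real L"
    using True by (intro mult_left_mono) (auto simp: fc_range_def)
  also have "\<dots> \<le> pi / 2 * (2 * real L + 2)"
    by (simp add: algebra_simps)
  finally have "\<bar>pi * real_of_int n / (2 * real L + 2)\<bar> \<le> pi / 2"
    by (simp add: abs_mult divide_le_eq)
  then have "0 \<le> cos (pi * real_of_int n / (2 * real L + 2))"
    unfolding abs_le_iff by (intro cos_ge_zero) linarith+
  then show ?thesis
    using True by (simp add: fc_cos_state_def)
qed (simp add: fc_cos_state_def)

lemma fc_cos_state_norm: "(\<Sum>n\<in>fc_range L. (fc_cos_state L n)\<^sup>2) = real L + 1"
proof -
  define \<theta> where "\<theta> = pi / (2 * real L + 2)"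
  have "0 < sin \<theta>"
    using pi_gt_zero by (intro sin_gt_zero) (simp_all add: \<theta>_def field_simps add_pos_nonneg)
  have "(2 * real L + 1) * \<theta> = pi - \<theta>"
    by (simp add: \<theta>_def field_simps)
  then have "sin ((2 * real L + 1) * \<theta>) = sin \<theta>"
    by simp
  moreover have "(\<Sum>n\<in>fc_range L. (fc_cos_state L n)\<^sup>2)
      = (\<Sum>m\<in>{- int L..int L}. (cos (real_of_int m * \<theta>))\<^sup>2)"
    by (intro sum.cong) (auto simp: fc_cos_state_def fc_range_def \<theta>_def mult.commute)
  ultimately have "2 * sin \<theta> * (\<Sum>n\<in>fc_range L. (fc_cos_state L n)\<^sup>2) = 2 * sin \<theta> * (real L + 1)"
    using sin_mult_sum_cos_squared[of \<theta> L] by (simp add: algebra_simps)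
  then show ?thesis
    using \<open>0 < sin \<theta>\<close> by simp
qed

lemma fc_cos_state_overlap:
  "(\<Sum>n\<in>{1 - int L..int L}. fc_cos_state L n * fc_cos_state L (n - 1))
     = (real L + 1) * cos (pi / (2 * real L + 2))"
proof -
  define \<theta> where "\<theta> = pi / (2 * real L + 2)"
  have "0 < sin \<theta>"
    using pi_gt_zero by (intro sin_gt_zero) (simp_all add: \<theta>_def field_simps add_pos_nonneg)
  have "2 * real L * \<theta> = pi - 2 * \<theta>"
    by (simp add: \<theta>_def field_simps)
  then have "sin (2 * real L * \<theta>) = 2 * sin \<theta> * cos \<theta>"
    by (simp add: sin_double)
  moreover have "(\<Sum>n\<in>{1 - int L..int L}. fc_cos_state L n * fc_cos_state L (n - 1))
      = (\<Sum>n\<in>{1 - int L..int L}. cos (real_of_int n * \<theta>) * cos (real_of_int (n - 1) * \<theta>))"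
    by (intro sum.cong) (auto simp: fc_cos_state_def fc_range_def \<theta>_def mult.commute)
  ultimately have "2 * sin \<theta> * (\<Sum>n\<in>{1 - int L..int L}. fc_cos_state L n * fc_cos_state L (n - 1))
               = 2 * sin \<theta> * ((real L + 1) * cos \<theta>)"
    using sin_mult_sum_cos_mult_cos_pred[of \<theta> L] by (simp add: algebra_simps)
  then show ?thesis
    using \<open>0 < sin \<theta>\<close> by (simp add: \<theta>_def)
qed

lemma fc_cos_state_xplus_ge:
  fixes L :: nat and k :: real
  defines "v \<equiv> \<lambda>n. complex_of_real (fc_cos_state L n)"
  assumes "0 \<le> k"
  shows "(real L + 1) * cos (pi / (2 * real L + 2)) \<le> cmod (fc_inner L v (fc_xplus L k v))"
proof -
  have "(real L + 1) * cos (pi / (2 * real L + 2))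
          = (\<Sum>n\<in>{1 - int L..int L}. fc_cos_state L n * fc_cos_state L (n - 1))"
    by (rule fc_cos_state_overlap[symmetric])
  also have "\<dots> \<le> (\<Sum>n\<in>{1 - int L..int L}. fc_b L k n * fc_cos_state L n * fc_cos_state L (n - 1))"
  proof (intro sum_mono)
    fix n
    assume "n \<in> {1 - int L..int L}"
    then have "1 * (fc_cos_state L n * fc_cos_state L (n - 1))
                 \<le> fc_b L k n * (fc_cos_state L n * fc_cos_state L (n - 1))"
      using fc_b_ge_1[OF \<open>0 \<le> k\<close>] fc_cos_state_nonneg by (intro mult_right_mono) simp_all
    then show "fc_cos_state L n * fc_cos_state L (n - 1) \<le> fc_b L k n * fc_cos_state L n * fc_cos_state L (n - 1)"
      by (simp add: mult.assoc)
  qed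
  also have "\<dots> \<le> cmod (fc_inner L v (fc_xplus L k v))"
    by (simp add: v_def fc_inner_xplus flip: of_real_mult of_real_sum)
  finally show ?thesis .
qed

lemma sin_squared_pi_div_plus_inverse_square_lt:
  fixes m :: real
  assumes "m \<noteq> 0"
  shows "1 / m\<^sup>2 + (sin (pi / (2 * m)))\<^sup>2 < 3.5 / m\<^sup>2"
proof -
  have "\<bar>sin (pi / (2 * m))\<bar>\<^sup>2 \<le> \<bar>pi / 2 / m\<bar>\<^sup>2"
    using abs_sin_x_le_abs_x[of "pi / (2 * m)"] by (intro power_mono) simp_all
  then have "(sin (pi / (2 * m)))\<^sup>2 \<le> (pi / 2)\<^sup>2 / m\<^sup>2"
    by (simp add: power_divide)
  moreover have "(pi / 2)\<^sup>2 < 2.5"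
  proof -
    have "pi / 2 < 1.58"
      using pi_approx by simp
    then have "(pi / 2)\<^sup>2 < 1.58\<^sup>2"
      using pi_gt_zero by (intro power_strict_mono) simp_all
    then show ?thesis
      by (simp add: power2_eq_square)
  qed
  then have "(pi / 2)\<^sup>2 / m\<^sup>2 < 2.5 / m\<^sup>2"
    using assms by (intro divide_strict_right_mono) simp_all
  moreover have "1 / m\<^sup>2 + 2.5 / m\<^sup>2 = 3.5 / m\<^sup>2"
    by (simp add: add_divide_distrib[symmetric])
  ultimately show ?thesis
    by linarith
qed

theorem mainTheorem7:
  fixes L :: nat and k :: real and chi :: fvec
  assumes "k \<ge> real L ^ 2 * (real L + 1) ^ 2"
    and "\<And>m. chi m = (if m \<in> fc_range L
                        then complex_of_real (cos (pi * real_of_int m / (2 * real L + 2))) else 0)"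
  shows "fc_uncert L k chi < 3.5 / (real L + 1) ^ 2"
proof -
  define \<theta> where "\<theta> = pi / (2 * (real L + 1))"
  have "0 \<le> k"
    using assms(1) by (meson order_trans zero_le_mult_iff zero_le_power2)
  have chi_eq: "chi = (\<lambda>n. complex_of_real (fc_cos_state L n))"
    using assms(2) by (auto simp: fc_cos_state_def)
  have "0 \<le> cos \<theta>"
    using pi_gt_zero by (intro cos_ge_zero) (simp_all add: \<theta>_def field_simps)
  then have "fc_uncert L k chi \<le> 1 + 1 / (real L + 1)\<^sup>2 - (cos \<theta>)\<^sup>2"
    using fc_b_squared_le_of_large_k[OF assms(1)] fc_cos_state_xplus_ge[OF \<open>0 \<le> k\<close>, of L]
    by (intro fc_uncert_le) (simp_all add: chi_eq fc_cos_state_norm \<theta>_def mult.commute)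
  also have "\<dots> = 1 / (real L + 1)\<^sup>2 + (sin \<theta>)\<^sup>2"
    by (simp add: cos_squared_eq)
  also have "\<dots> < 3.5 / (real L + 1)\<^sup>2"
    unfolding \<theta>_def by (rule sin_squared_pi_div_plus_inverse_square_lt) simp
  finally show ?thesis .
qed

end
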